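(* Let $\{\mathcal G,(\Gamma_0,\Gamma_1),(\widetilde\Gamma_0,\widetilde\Gamma_1)\}$ be a triple for the adjoint pair $\{S,\widetilde S\}$ satisfying (G), (D), (M), with $\rho(A_0)\neq\emptyset$, $\gamma$-fields $\gamma,\widetilde\gamma$ and Weyl functions $M,\widetilde M$. Let $B,\widetilde B$ be linear operators in $\mathcal G$, $\lambda\in\rho(A_0)$, $\mu\in\rho(\widetilde A_0)$. (i) If $\lambda\notin\sigma_p(A_B)$ and $f\in\mathfrak H$ satisfies $\widetilde\gamma(\overline\lambda)^*f\in\operatorname{dom}B$ and $B\widetilde\gamma(\overline\lambda)^*f\in\operatorname{ran}(I-BM(\lambda))$, then $f\in\operatorname{ran}(A_B-\lambda)$ and $(A_B-\lambda)^{-1}f=(A_0-\lambda)^{-1}f+\gamma(\lambda)(I-BM(\lambda))^{-1}B\widetilde\gamma(\overline\lambda)^*f$. (ii) If $\mu\notin\sigma_p(\widetilde A_{\widetilde B})$ and $g\in\mathfrak H$ satisfies $\gamma(\overline\mu)^*g\in\operatorname{dom}\widetilde B$ and $\widetilde B\gamma(\overline\mu)^*g\in\operatorname{ran}(I-\widetilde B\widetilde M(\mu))$, then $g\in\operatorname{ran}(\widetilde A_{\widetilde B}-\mu)$ and $(\widetilde A_{\widetilde B}-\mu)^{-1}g=(\widetilde A_0-\mu)^{-1}g+\widetilde\gamma(\mu)(I-\widetilde B\widetilde M(\mu))^{-1}\widetilde B\gamma(\overline\mu)^*g$.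
   Context: Let $\mathfrak H$ be a separable Hilbert space. An adjoint pair $\{S,\widetilde S\}$ consists of densely defined closed operators $S,\widetilde S$ in $\mathfrak H$ with $(Sf,g)=(f,\widetilde Sg)$ for all $f\in\operatorname{dom}S$, $g\in\operatorname{dom}\widetilde S$. Fix operators $T\subset S^*$ and $\widetilde T\subset\widetilde S^*$ which are cores, i.e. $\overline T=S^*$ and $\overline{\widetilde T}=\widetilde S^*$. A triple $\{\mathcal G,(\Gamma_0,\Gamma_1),(\widetilde\Gamma_0,\widetilde\Gamma_1)\}$ for $\{S,\widetilde S\}$ consists of a Hilbert space $\mathcal G$ and linear maps $\Gamma_0,\Gamma_1:\operatorname{dom}T\to\mathcal G$, $\widetilde\Gamma_0,\widetilde\Gamma_1:\operatorname{dom}\widetilde T\to\mathcal G$. Put $A_0:=T\upharpoonright\ker\Gamma_0$ and $\widetilde A_0:=\widetilde T\upharpoonright\ker\widetilde\Gamma_0$. Conditions: (G) $(Tf,g)_{\mathfrak H}-(f,\widetilde Tg)_{\mathfrak H}=(\Gamma_1f,\widetilde\Gamma_0g)_{\mathcal G}-(\Gamma_0f,\widetilde\Gamma_1g)_{\mathcal G}$ for all $f\in\operatorname{dom}T$, $g\in\operatorname{dom}\widetilde T$; (D) $\operatorname{ran}\Gamma_0$ and $\operatorname{ran}\widetilde\Gamma_0$ are dense in $\mathcal G$; (M) $A_0^*=\widetilde A_0$ and $\widetilde A_0^*=A_0$. For $\lambda\in\rho(A_0)$ one has $\operatorname{dom}T=\ker\Gamma_0\dotplus\ker(T-\lambda)$,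 so $\Gamma_0\upharpoonright\ker(T-\lambda)$ is injective; similarly for $\widetilde T$. The $\gamma$-fields are $\gamma(\lambda):=(\Gamma_0\upharpoonright\ker(T-\lambda))^{-1}$, $\widetilde\gamma(\mu):=(\widetilde\Gamma_0\upharpoonright\ker(\widetilde T-\mu))^{-1}$; the Weyl functions are $M(\lambda):=\Gamma_1\gamma(\lambda)$, $\lambda\in\rho(A_0)$, and $\widetilde M(\mu):=\widetilde\Gamma_1\widetilde\gamma(\mu)$, $\mu\in\rho(\widetilde A_0)$. Products of operators have their natural domains, and $(I-BM(\lambda))^{-1}$ denotes the inverse of the injective operator $I-BM(\lambda)$ on its range. Define $A_Bf:=Tf$ on $\operatorname{dom}A_B:=\{f\in\operatorname{dom}T:\Gamma_1f\in\operatorname{dom}B,\ B\Gamma_1f=\Gamma_0f\}$ and $\widetilde A_{\widetilde B}g:=\widetilde Tg$ on $\operatorname{dom}\widetilde A_{\widetilde B}:=\{g\in\operatorname{dom}\widetilde T:\widetilde\Gamma_1g\in\operatorname{dom}\widetilde B,\ \widetilde B\widetilde\Gamma_1g=\widetilde\Gamma_0g\}$. $\sigma_p$ denotes the set of eigenvalues. *)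

theory Defs
  imports "HOL-Analysis.Analysis"
begin

text \<open>The distribution has no complex inner product spaces, so we introduce them as a
  type class: a real normed vector space with a compatible complex scalar multiplication
  and a complex inner product (linear in the first, conjugate-linear in the second
  argument) inducing the norm.\<close>

class complex_inner = real_normed_vector +
  fixes scaleC :: "complex \<Rightarrow> 'a \<Rightarrow> 'a" (infixr \<open>*\<^sub>C\<close> 75)
    and cinner :: "'a \<Rightarrow> 'a \<Rightarrow> complex"
  assumes scaleC_add_right: "c *\<^sub>C (x + y) = c *\<^sub>C x + c *\<^sub>C y"
    and scaleC_add_left: "(b + c) *\<^sub>C x = b *\<^sub>C x + c *\<^sub>C x"
    and scaleC_scaleC: "b *\<^sub>C (c *\<^sub>C x) = (b * c) *\<^sub>C x"
    and scaleC_one: "1 *\<^sub>C x = x"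
    and scaleR_scaleC: "scaleR r x = complex_of_real r *\<^sub>C x"
    and cinner_add_left: "cinner (x + y) z = cinner x z + cinner y z"
    and cinner_scaleC_left: "cinner (c *\<^sub>C x) y = c * cinner x y"
    and cinner_commute: "cinner y x = cnj (cinner x y)"
    and cinner_self_nonneg: "Im (cinner x x) = 0 \<and> Re (cinner x x) \<ge> 0"
    and cinner_self_eq_zero: "cinner x x = 0 \<longleftrightarrow> x = 0"
    and norm_eq_sqrt_cinner: "norm x = sqrt (Re (cinner x x))"

class complex_hilbert = complex_inner + complete_space

text \<open>An operator from 'a to 'b is represented by its graph, a set of pairs.\<close>

definition csubspace :: "'a::complex_inner set \<Rightarrow> bool" where
  "csubspace U \<longleftrightarrow> 0 \<in> U \<and> (\<forall>x\<in>U. \<forall>y\<in>U. x + y \<in> U) \<and> (\<forall>c. \<forall>x\<in>U. c *\<^sub>C x \<in> U)"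

definition linear_rel :: "('a::complex_inner \<times> 'b::complex_inner) set \<Rightarrow> bool" where
  "linear_rel R \<longleftrightarrow> (0, 0) \<in> R \<and>
     (\<forall>x y u v. (x, y) \<in> R \<longrightarrow> (u, v) \<in> R \<longrightarrow> (x + u, y + v) \<in> R) \<and>
     (\<forall>c x y. (x, y) \<in> R \<longrightarrow> (c *\<^sub>C x, c *\<^sub>C y) \<in> R)"

definition lin_op :: "('a::complex_inner \<times> 'b::complex_inner) set \<Rightarrow> bool" where
  "lin_op R \<longleftrightarrow> linear_rel R \<and> single_valued R"

definition densely_defined :: "('a::complex_inner \<times> 'b::complex_inner) set \<Rightarrow> bool" where
  "densely_defined R \<longleftrightarrow> closure (Domain R) = UNIV"

definition closed_op :: "('a::complex_inner \<times> 'b::complex_inner) set \<Rightarrow> bool" where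
  "closed_op R \<longleftrightarrow> lin_op R \<and> closed R"

definition adj :: "('a::complex_inner \<times> 'b::complex_inner) set \<Rightarrow> ('b \<times> 'a) set" where
  "adj R = {(g, h). \<forall>(f, k) \<in> R. cinner k g = cinner f h}"

definition adjoint_pair :: "('a::complex_inner \<times> 'a) set \<Rightarrow> ('a \<times> 'a) set \<Rightarrow> bool" where
  "adjoint_pair S St \<longleftrightarrow> closed_op S \<and> closed_op St \<and> densely_defined S \<and> densely_defined St \<and>
     (\<forall>(f, u) \<in> S. \<forall>(g, v) \<in> St. cinner u g = cinner f v)"

definition rel_app :: "('a \<times> 'b) set \<Rightarrow> 'a \<Rightarrow> 'b" where
  "rel_app R x = (THE y. (x, y) \<in> R)"

definition op_shift :: "('a::complex_inner \<times> 'a) set \<Rightarrow> complex \<Rightarrow> ('a \<times> 'a) set" where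
  "op_shift A l = {(x, y - l *\<^sub>C x) | x y. (x, y) \<in> A}"

definition ident_minus :: "('a::complex_inner \<times> 'a) set \<Rightarrow> ('a \<times> 'a) set" where
  "ident_minus R = {(x, x - y) | x y. (x, y) \<in> R}"

definition graph_on :: "'a set \<Rightarrow> ('a \<Rightarrow> 'b) \<Rightarrow> ('a \<times> 'b) set" where
  "graph_on D F = {(x, F x) | x. x \<in> D}"

definition lin_on :: "'a::complex_inner set \<Rightarrow> ('a \<Rightarrow> 'b::complex_inner) \<Rightarrow> bool" where
  "lin_on D F \<longleftrightarrow> (\<forall>x\<in>D. \<forall>y\<in>D. F (x + y) = F x + F y) \<and> (\<forall>c. \<forall>x\<in>D. F (c *\<^sub>C x) = c *\<^sub>C F x)"

definition point_spectrum :: "('a::complex_inner \<times> 'a) set \<Rightarrow> complex set" where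
  "point_spectrum A = {l. \<exists>x. x \<noteq> 0 \<and> (x, l *\<^sub>C x) \<in> A}"

definition resolvent_set :: "('a::complex_inner \<times> 'a) set \<Rightarrow> complex set" where
  "resolvent_set A = {l. single_valued (converse (op_shift A l)) \<and> Range (op_shift A l) = UNIV \<and>
      (\<exists>C. \<forall>(x, y) \<in> op_shift A l. norm x \<le> C * norm y)}"

text \<open>\<open>T\<close> is given by its domain \<open>domT\<close> and action \<open>T\<close>; it is a core of \<open>S*\<close>.\<close>
definition core_of :: "'a::complex_inner set \<Rightarrow> ('a \<Rightarrow> 'a) \<Rightarrow> ('a \<times> 'a) set \<Rightarrow> bool" where
  "core_of domT T Sadj \<longleftrightarrow> csubspace domT \<and> lin_on domT T \<and>
     graph_on domT T \<subseteq> Sadj \<and> closure (graph_on domT T) = Sadj"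

definition A0_op :: "'a set \<Rightarrow> ('a \<Rightarrow> 'a) \<Rightarrow> ('a \<Rightarrow> 'b::zero) \<Rightarrow> ('a \<times> 'a) set" where
  "A0_op domT T G0 = graph_on {f \<in> domT. G0 f = 0} T"

definition gamma_field :: "'a::complex_inner set \<Rightarrow> ('a \<Rightarrow> 'a) \<Rightarrow> ('a \<Rightarrow> 'b) \<Rightarrow> complex \<Rightarrow> ('b \<times> 'a) set" where
  "gamma_field domT T G0 l = converse (graph_on {f \<in> domT. T f = l *\<^sub>C f} G0)"

definition weyl_fun :: "'a::complex_inner set \<Rightarrow> ('a \<Rightarrow> 'a) \<Rightarrow> ('a \<Rightarrow> 'b) \<Rightarrow> ('a \<Rightarrow> 'b) \<Rightarrow> complex \<Rightarrow> ('b \<times> 'b) set" where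
  "weyl_fun domT T G0 G1 l = gamma_field domT T G0 l O graph_on domT G1"

definition A_B_op :: "'a set \<Rightarrow> ('a \<Rightarrow> 'a) \<Rightarrow> ('a \<Rightarrow> 'b) \<Rightarrow> ('a \<Rightarrow> 'b) \<Rightarrow> ('b \<times> 'b) set \<Rightarrow> ('a \<times> 'a) set" where
  "A_B_op domT T G0 G1 B = graph_on {f \<in> domT. G1 f \<in> Domain B \<and> rel_app B (G1 f) = G0 f} T"

end

theory Submission
  imports Defs
begin

text \<open>Write \<open>Tt, Gt0, Gt1\<close> for the tilde side and \<open>\<lambda>' = cnj \<lambda>\<close>. Put
  \<open>u = (A0 - \<lambda>)\<^sup>-\<^sup>1 f\<close>. Green's identity, tested against \<open>ker (Tt - \<lambda>')\<close>, gives
  \<open>\<gamma>t(\<lambda>')\<^sup>* f = G1 u\<close>. This adjoint is single-valued because the domain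
  \<open>Gt0 (ker (Tt - \<lambda>')) = Gt0 (dom Tt)\<close> of \<open>\<gamma>t(\<lambda>')\<close> is dense; the equality needs
  \<open>At0 - \<lambda>' = (A0 - \<lambda>)\<^sup>*\<close> to be onto, which holds because it is bounded below (so its
  range is closed in the Hilbert space) and its range has trivial orthogonal complement
  (as \<open>A0 - \<lambda>\<close> is injective).
  Next write \<open>B (G1 u) = (I - B M(\<lambda>)) (G0 w)\<close> with \<open>w \<in> ker (T - \<lambda>)\<close>. Then \<open>v = u + w\<close>
  satisfies \<open>B (G1 v) = G0 v\<close> and \<open>(T - \<lambda>) v = f\<close>, so \<open>v = (A_B - \<lambda>)\<^sup>-\<^sup>1 f\<close> and
  \<open>w = \<gamma>(\<lambda>) (I - B M(\<lambda>))\<^sup>-\<^sup>1 B \<gamma>t(\<lambda>')\<^sup>* f\<close>; all these inverses are single-valued since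
  \<open>\<lambda> \<notin> \<sigma>\<^sub>p(A_B)\<close>. Part (ii) is part (i) for the triple with the two sides exchanged.\<close>

section \<open>Complex inner product spaces\<close>

interpretation complex_module: module "scaleC :: complex \<Rightarrow> 'a::complex_inner \<Rightarrow> 'a"
  by standard (simp_all add: scaleC_add_right scaleC_add_left scaleC_scaleC scaleC_one)

lemma cinner_zero_left [simp]: "cinner 0 (y::'a::complex_inner) = 0"
  using cinner_scaleC_left[of 0 "0::'a" y] by simp

lemma cinner_zero_right [simp]: "cinner (x::'a::complex_inner) 0 = 0"
  using cinner_commute[of 0 x] by simp

lemma cinner_scaleC_right: "cinner (x::'a::complex_inner) (c *\<^sub>C y) = cnj c * cinner x y"
proof -
  have "cinner x (c *\<^sub>C y) = cnj (c * cinner y x)"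
    by (simp only: cinner_commute[of x "c *\<^sub>C y"] cinner_scaleC_left)
  thus ?thesis by (simp add: cinner_commute[of x y])
qed

lemma cinner_add_right: "cinner (x::'a::complex_inner) (y + z) = cinner x y + cinner x z"
proof -
  have "cinner x (y + z) = cnj (cinner y x + cinner z x)"
    by (simp only: cinner_commute[of x "y + z"] cinner_add_left)
  thus ?thesis by (simp add: cinner_commute[of x y] cinner_commute[of x z])
qed

lemma cinner_minus_left: "cinner (- x) (y::'a::complex_inner) = - cinner x y"
  using cinner_scaleC_left[of "-1" x y] by simp

lemma cinner_minus_right: "cinner (x::'a::complex_inner) (- y) = - cinner x y"
  using cinner_scaleC_right[of x "-1" y] by simp

lemma cinner_diff_left: "cinner (x - y) (z::'a::complex_inner) = cinner x z - cinner y z"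
  unfolding diff_conv_add_uminus cinner_add_left cinner_minus_left ..

lemma cinner_diff_right: "cinner (x::'a::complex_inner) (y - z) = cinner x y - cinner x z"
  unfolding diff_conv_add_uminus cinner_add_right cinner_minus_right ..

lemmas cinner_simps = cinner_add_left cinner_add_right cinner_diff_left cinner_diff_right
  cinner_scaleC_left cinner_scaleC_right

lemma cinner_self: "cinner (x::'a::complex_inner) x = complex_of_real ((norm x)\<^sup>2)"
  using cinner_self_nonneg[of x] norm_eq_sqrt_cinner[of x] by (simp add: complex_eq_iff)

lemma norm_cinner_le: "cmod (cinner (x::'a::complex_inner) y) \<le> norm x * norm y"
proof (cases "y = 0")
  case True then show ?thesis by simp
next
  case False
  define a where "a = cinner x y"
  define N where "N = (norm y)\<^sup>2"
  have N: "N > 0" using False by (simp add: N_def)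
  define t where "t = a / complex_of_real N"
  have "cinner (x - t *\<^sub>C y) (x - t *\<^sub>C y) = cinner x x - cnj t * a - t * cnj a + t * cnj t * N"
    by (simp add: cinner_simps cinner_self[of y, folded N_def] cinner_commute[of y x]
        a_def[symmetric] algebra_simps)
  also have "\<dots> = complex_of_real ((norm x)\<^sup>2 - (cmod a)\<^sup>2 / N)"
    using N complex_norm_square[of a] by (simp add: t_def cinner_self field_simps)
  finally have "0 \<le> (norm x)\<^sup>2 - (cmod a)\<^sup>2 / N"
    using cinner_self_nonneg[of "x - t *\<^sub>C y"] by simp
  hence "(cmod a)\<^sup>2 \<le> (norm x * norm y)\<^sup>2"
    using N by (simp add: N_def field_simps power_mult_distrib)
  thus ?thesis unfolding a_def by (rule power2_le_imp_le) simp
qed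

lemma parallelogram_law:
  "(norm (a + b))\<^sup>2 + (norm (a - b))\<^sup>2 = 2 * (norm (a::'a::complex_inner))\<^sup>2 + 2 * (norm b)\<^sup>2"
proof -
  have "complex_of_real ((norm (a + b))\<^sup>2 + (norm (a - b))\<^sup>2) = cinner (a + b) (a + b) + cinner (a - b) (a - b)"
    by (simp add: cinner_self)
  also have "\<dots> = 2 * cinner a a + 2 * cinner b b"
    by (simp add: cinner_simps algebra_simps)
  also have "\<dots> = complex_of_real (2 * (norm a)\<^sup>2 + 2 * (norm b)\<^sup>2)"
    by (simp add: cinner_self)
  finally show ?thesis by (simp only: of_real_eq_iff)
qed

lemma tendsto_cinner_right:
  fixes X :: "nat \<Rightarrow> 'a::complex_inner"
  assumes "X \<longlonglongrightarrow> a"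
  shows "(\<lambda>n. cinner c (X n)) \<longlonglongrightarrow> cinner c a"
proof -
  have lim: "(\<lambda>n. norm c * norm (X n - a)) \<longlonglongrightarrow> 0"
    using tendsto_mult_right_zero[OF tendsto_norm_zero[OF LIM_zero[OF assms]]] .
  have "norm (cinner c (X n) - cinner c a) \<le> norm c * norm (X n - a)" for n
    using norm_cinner_le[of c "X n - a"] by (simp only: cinner_diff_right)
  then have "(\<lambda>n. cinner c (X n) - cinner c a) \<longlonglongrightarrow> 0"
    by (intro Lim_null_comparison[OF always_eventually lim]) blast
  thus ?thesis by (rule LIM_zero_cancel)
qed

lemma tendsto_cinner_left:
  fixes X :: "nat \<Rightarrow> 'a::complex_inner"
  assumes "X \<longlonglongrightarrow> a"
  shows "(\<lambda>n. cinner (X n) c) \<longlonglongrightarrow> cinner a c"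
  using tendsto_cnj[OF tendsto_cinner_right[OF assms, of c]]
  by (simp add: cinner_commute[of c])

section \<open>The projection theorem\<close>

lemma csubspace_add: "csubspace U \<Longrightarrow> x \<in> U \<Longrightarrow> y \<in> U \<Longrightarrow> x + y \<in> U"
  unfolding csubspace_def by blast

lemma csubspace_scaleC: "csubspace U \<Longrightarrow> x \<in> U \<Longrightarrow> c *\<^sub>C x \<in> U"
  unfolding csubspace_def by blast

lemma csubspace_diff: "csubspace U \<Longrightarrow> x \<in> U \<Longrightarrow> y \<in> U \<Longrightarrow> x - y \<in> U"
  using csubspace_add[of U x "(-1) *\<^sub>C y"] csubspace_scaleC[of U y "-1"] by simp

lemma nearest_point_orthogonal:
  fixes V :: "'a::complex_inner set"
  assumes V: "csubspace V" and v: "v \<in> V" and w: "w \<in> V"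
    and nearest: "\<forall>u\<in>V. (norm (x - v))\<^sup>2 \<le> (norm (x - u))\<^sup>2"
  shows "cinner (x - v) w = 0"
proof (rule ccontr)
  define q where "q = x - v"
  define c where "c = cinner q w"
  assume "cinner (x - v) w \<noteq> 0"
  hence c0: "c \<noteq> 0" by (simp add: c_def q_def)
  \<comment> \<open>for small \<open>s > 0\<close>, the point \<open>v + s c w\<close> is strictly closer to \<open>x\<close> than \<open>v\<close>\<close>
  define s :: real where "s = 1 / ((norm w)\<^sup>2 + 1)"
  have np: "0 < (norm w)\<^sup>2 + 1" by (simp add: add_nonneg_pos)
  have s: "s > 0" "s * (norm w)\<^sup>2 < 1" unfolding s_def using np by (simp_all add: field_simps)
  define t where "t = complex_of_real s * c"
  have "v + t *\<^sub>C w \<in> V" using V v w by (intro csubspace_add csubspace_scaleC)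
  with nearest have le: "(norm q)\<^sup>2 \<le> (norm (q - t *\<^sub>C w))\<^sup>2"
    unfolding q_def by (metis diff_diff_eq)
  have "cinner (q - t *\<^sub>C w) (q - t *\<^sub>C w) = cinner q q - cnj t * c - t * cnj c + t * cnj t * cinner w w"
    by (simp add: cinner_simps cinner_commute[of w q] c_def[symmetric] algebra_simps)
  also have "\<dots> = cinner q q - complex_of_real (s * (cmod c)\<^sup>2 * (2 - s * (norm w)\<^sup>2))"
  proof -
    have "c * cnj c = complex_of_real ((cmod c)\<^sup>2)" using complex_norm_square[of c] by simp
    moreover have "cnj t * c = complex_of_real s * (c * cnj c)" "t * cnj c = complex_of_real s * (c * cnj c)"
      "t * cnj t = complex_of_real s * complex_of_real s * (c * cnj c)"
      by (simp_all add: t_def)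
    ultimately show ?thesis unfolding cinner_self[of w] by (simp add: algebra_simps)
  qed
  finally have "complex_of_real ((norm (q - t *\<^sub>C w))\<^sup>2) =
      complex_of_real ((norm q)\<^sup>2 - s * (cmod c)\<^sup>2 * (2 - s * (norm w)\<^sup>2))"
    by (simp only: cinner_self of_real_diff)
  hence "(norm (q - t *\<^sub>C w))\<^sup>2 = (norm q)\<^sup>2 - s * (cmod c)\<^sup>2 * (2 - s * (norm w)\<^sup>2)"
    by (simp only: of_real_eq_iff)
  moreover have "s * (cmod c)\<^sup>2 * (2 - s * (norm w)\<^sup>2) > 0"
    using s c0 by (intro mult_pos_pos) auto
  ultimately show False using le by linarith
qed

lemma nearly_nearest_points_close:
  fixes V :: "'a::complex_inner set"
  assumes V: "csubspace V" and a: "a \<in> V" and b: "b \<in> V"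
    and d: "\<forall>u\<in>V. d \<le> (norm (x - u))\<^sup>2"
  shows "(norm (a - b))\<^sup>2 \<le> 2 * ((norm (x - a))\<^sup>2 - d) + 2 * ((norm (x - b))\<^sup>2 - d)"
proof -
  define m where "m = (1/2::real) *\<^sub>R (a + b)"
  have "m \<in> V" unfolding m_def scaleR_scaleC using V a b by (intro csubspace_scaleC csubspace_add)
  have "(x - a) + (x - b) = 2 *\<^sub>R (x - m)"
    by (simp add: m_def algebra_simps scaleR_2)
  hence "(norm ((x - a) + (x - b)))\<^sup>2 = 4 * (norm (x - m))\<^sup>2"
    by (simp add: power2_eq_square)
  also have "\<dots> \<ge> 4 * d" using d \<open>m \<in> V\<close> by simp
  finally show ?thesis
    using parallelogram_law[of "x - a" "x - b"] by (simp add: norm_minus_commute)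
qed

lemma closed_csubspace_nearest_point:
  fixes V :: "'a::complex_hilbert set"
  assumes V: "csubspace V" and closed: "closed V"
  shows "\<exists>v\<in>V. \<forall>u\<in>V. (norm (x - v))\<^sup>2 \<le> (norm (x - u))\<^sup>2"
proof -
  define F where "F = (\<lambda>v. (norm (x - v))\<^sup>2)"
  define d where "d = Inf (F ` V)"
  have ne: "F ` V \<noteq> {}" using V unfolding csubspace_def by blast
  have bdd: "bdd_below (F ` V)" unfolding F_def by (rule bdd_belowI[of _ 0]) auto
  have d_le: "\<forall>u\<in>V. d \<le> (norm (x - u))\<^sup>2"
    unfolding d_def using bdd by (auto simp: F_def intro: cInf_lower)
  have "\<exists>v\<in>V. F v < d + inverse (real (Suc n))" for n
    using cInf_lessD[OF ne, of "d + inverse (real (Suc n))"] unfolding d_def by auto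
  then obtain s where s: "\<And>n. s n \<in> V" "\<And>n. F (s n) < d + inverse (real (Suc n))"
    by metis
  have close: "(norm (s m - s n))\<^sup>2 \<le> 2 * inverse (real (Suc m)) + 2 * inverse (real (Suc n))" for m n
    using nearly_nearest_points_close[OF V s(1) s(1) d_le, of m n] s(2)[of m] s(2)[of n]
    unfolding F_def by argo
  have "Cauchy s"
  proof (rule metric_CauchyI)
    fix e :: real assume e: "e > 0"
    obtain M :: nat where M: "inverse (real (Suc M)) < e\<^sup>2 / 4"
      using reals_Archimedean[of "e\<^sup>2 / 4"] e by auto
    have "dist (s m) (s n) < e" if "m \<ge> M" "n \<ge> M" for m n
    proof -
      have "inverse (real (Suc m)) \<le> inverse (real (Suc M))"
        "inverse (real (Suc n)) \<le> inverse (real (Suc M))"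
        using that by (simp_all add: le_imp_inverse_le)
      hence "(norm (s m - s n))\<^sup>2 < e\<^sup>2" using close[of m n] M by linarith
      hence "(dist (s m) (s n))\<^sup>2 < e\<^sup>2" by (simp add: dist_norm)
      thus ?thesis using e by (simp add: power_less_imp_less_base)
    qed
    thus "\<exists>M. \<forall>m\<ge>M. \<forall>n\<ge>M. dist (s m) (s n) < e" by blast
  qed
  then obtain v where lim: "s \<longlonglongrightarrow> v" unfolding convergent_eq_Cauchy[symmetric] convergent_def by blast
  have "v \<in> V" using closed_sequentially[OF closed] s(1) lim by blast
  have "(\<lambda>n. F (s n)) \<longlonglongrightarrow> F v" unfolding F_def by (intro tendsto_intros lim)
  moreover have "(\<lambda>n. d + inverse (real (Suc n))) \<longlonglongrightarrow> d + 0"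
    by (intro tendsto_intros LIMSEQ_inverse_real_of_nat)
  ultimately have "F v \<le> d + 0"
    by (rule LIMSEQ_le) (use s(2) less_imp_le in blast)
  hence "\<forall>u\<in>V. (norm (x - v))\<^sup>2 \<le> (norm (x - u))\<^sup>2"
    using d_le unfolding F_def by (metis add_0_right order_trans)
  with \<open>v \<in> V\<close> show ?thesis by blast
qed

lemma closed_csubspace_eq_UNIV:
  fixes V :: "'a::complex_hilbert set"
  assumes V: "csubspace V" and closed: "closed V"
    and orthogonal_trivial: "\<And>q. \<forall>w\<in>V. cinner q w = 0 \<Longrightarrow> q = 0"
  shows "V = UNIV"
proof -
  have "x \<in> V" for x
  proof -
    obtain v where "v \<in> V" "\<forall>u\<in>V. (norm (x - v))\<^sup>2 \<le> (norm (x - u))\<^sup>2"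
      using closed_csubspace_nearest_point[OF V closed] by blast
    hence "x - v = 0" using nearest_point_orthogonal[OF V] orthogonal_trivial by blast
    thus ?thesis using \<open>v \<in> V\<close> by simp
  qed
  thus ?thesis by blast
qed

section \<open>Adjoints of linear relations\<close>

lemma adj_iff: "(g, h) \<in> adj R \<longleftrightarrow> (\<forall>f k. (f, k) \<in> R \<longrightarrow> cinner k g = cinner f h)"
  unfolding adj_def by auto

lemma op_shift_iff: "(x, z) \<in> op_shift A l \<longleftrightarrow> (x, z + l *\<^sub>C x) \<in> A"
  unfolding op_shift_def by force

lemma ident_minus_iff: "(x, z) \<in> ident_minus R \<longleftrightarrow> (\<exists>y. (x, y) \<in> R \<and> z = x - y)"
  unfolding ident_minus_def by auto

lemma graph_on_iff: "(x, y) \<in> graph_on D F \<longleftrightarrow> x \<in> D \<and> y = F x"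
  unfolding graph_on_def by auto

lemma rel_app_eqI: "(x, y) \<in> R \<Longrightarrow> (\<And>y'. (x, y') \<in> R \<Longrightarrow> y' = y) \<Longrightarrow> rel_app R x = y"
  unfolding rel_app_def by (rule the_equality)

lemma rel_app_eq: "single_valued R \<Longrightarrow> (x, y) \<in> R \<Longrightarrow> rel_app R x = y"
  by (rule rel_app_eqI) (auto simp: single_valued_def)

lemma lin_op_linear_rel: "lin_op R \<Longrightarrow> linear_rel R"
  unfolding lin_op_def by blast

lemma lin_op_rel_app: "lin_op R \<Longrightarrow> (x, y) \<in> R \<Longrightarrow> rel_app R x = y"
  unfolding lin_op_def by (blast intro: rel_app_eq)

lemma linear_rel_add: "linear_rel R \<Longrightarrow> (x, y) \<in> R \<Longrightarrow> (u, v) \<in> R \<Longrightarrow> (x + u, y + v) \<in> R"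
  unfolding linear_rel_def by blast

lemma linear_rel_diff:
  assumes "linear_rel R" "(x, y) \<in> R" "(u, v) \<in> R"
  shows "(x - u, y - v) \<in> R"
proof -
  have "((-1) *\<^sub>C u, (-1) *\<^sub>C v) \<in> R" using assms(1,3) unfolding linear_rel_def by blast
  hence "(- u, - v) \<in> R" by simp
  with assms(1,2) have "(x + - u, y + - v) \<in> R" unfolding linear_rel_def by blast
  thus ?thesis by simp
qed

lemma linear_rel_adj: "linear_rel (adj R)"
  unfolding linear_rel_def adj_iff by (simp add: cinner_add_right cinner_scaleC_right)

lemma closed_adj: "closed (adj R)"
  unfolding closed_sequential_limits
proof (intro allI impI, elim conjE)
  fix P gh
  assume P: "\<forall>n. P n \<in> adj R" and lim: "P \<longlonglongrightarrow> gh"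
  obtain g h where gh: "gh = (g, h)" by fastforce
  show "gh \<in> adj R"
    unfolding gh adj_iff
  proof (intro allI impI)
    fix f k assume "(f, k) \<in> R"
    moreover have "(fst (P n), snd (P n)) \<in> adj R" for n
      unfolding prod.collapse using P ..
    ultimately have "cinner k (fst (P n)) = cinner f (snd (P n))" for n
      unfolding adj_iff by blast
    moreover have "(\<lambda>n. cinner k (fst (P n))) \<longlonglongrightarrow> cinner k g"
      using tendsto_fst[OF lim] unfolding gh fst_conv by (rule tendsto_cinner_right)
    moreover have "(\<lambda>n. cinner f (snd (P n))) \<longlonglongrightarrow> cinner f h"
      using tendsto_snd[OF lim] unfolding gh snd_conv by (rule tendsto_cinner_right)
    ultimately show "cinner k g = cinner f h" using LIMSEQ_unique by fastforce
  qed
qed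

lemma adj_op_shift: "adj (op_shift A l) = op_shift (adj A) (cnj l)"
proof -
  have shifted: "cinner (k - l *\<^sub>C f) g = cinner f h \<longleftrightarrow> cinner k g = cinner f (h + cnj l *\<^sub>C g)"
    for f k g h
    by (auto simp: cinner_simps diff_eq_eq)
  have "(g, h) \<in> adj (op_shift A l) \<longleftrightarrow> (g, h + cnj l *\<^sub>C g) \<in> adj A" for g h
    unfolding adj_iff shifted[symmetric] op_shift_def by blast
  thus ?thesis by (auto simp: op_shift_iff)
qed

lemma orthogonal_to_dense_eq_zero:
  fixes p :: "'a::complex_inner"
  assumes dense: "closure D = UNIV" and orthogonal: "\<forall>a\<in>D. cinner a p = 0"
  shows "p = 0"
proof -
  obtain X where X: "\<And>n. X n \<in> D" "X \<longlonglongrightarrow> p"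
    using dense closure_sequential[of p D] by blast
  have "(\<lambda>n. cinner (X n) p) \<longlonglongrightarrow> cinner p p" by (rule tendsto_cinner_left[OF X(2)])
  moreover have "(\<lambda>n. cinner (X n) p) = (\<lambda>n. 0)" using orthogonal X(1) by auto
  ultimately have "cinner p p = 0" using LIMSEQ_unique tendsto_const by metis
  thus ?thesis using cinner_self_eq_zero by blast
qed

lemma single_valued_adj:
  assumes "closure (Domain R) = UNIV"
  shows "single_valued (adj R)"
proof (rule single_valuedI)
  fix g h1 h2 assume "(g, h1) \<in> adj R" "(g, h2) \<in> adj R"
  hence "\<forall>a\<in>Domain R. cinner a (h1 - h2) = 0"
    unfolding adj_iff by (auto simp: cinner_diff_right)
  thus "h1 = h2" using orthogonal_to_dense_eq_zero[OF assms] by force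
qed

lemma Cauchy_dominated:
  fixes X :: "nat \<Rightarrow> 'a::metric_space" and Y :: "nat \<Rightarrow> 'b::metric_space"
  assumes "Cauchy Y" and "C \<ge> 0" and dominated: "\<And>m n. dist (X m) (X n) \<le> C * dist (Y m) (Y n)"
  shows "Cauchy X"
proof (rule metric_CauchyI)
  fix e :: real assume e: "e > 0"
  then obtain M where M: "\<forall>m\<ge>M. \<forall>n\<ge>M. dist (Y m) (Y n) < e / (C + 1)"
    using \<open>Cauchy Y\<close> \<open>C \<ge> 0\<close> unfolding Cauchy_def by (metis add_nonneg_pos divide_pos_pos zero_less_one)
  have "dist (X m) (X n) < e" if "m \<ge> M" "n \<ge> M" for m n
  proof -
    have "dist (X m) (X n) \<le> C * (e / (C + 1))"
      using dominated[of m n] M that \<open>C \<ge> 0\<close> by (meson less_imp_le mult_left_mono order_trans)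
    also have "\<dots> < e" using e \<open>C \<ge> 0\<close> by (simp add: field_simps)
    finally show ?thesis .
  qed
  thus "\<exists>M. \<forall>m\<ge>M. \<forall>n\<ge>M. dist (X m) (X n) < e" by blast
qed

lemma closed_Range_if_bounded_below:
  fixes R :: "('a::complex_hilbert \<times> 'b::complex_inner) set"
  assumes linear: "linear_rel R" and closed: "closed R" and "C \<ge> 0"
    and bounded_below: "\<forall>(x, y) \<in> R. norm x \<le> C * norm y"
  shows "closed (Range R)"
  unfolding closed_sequential_limits
proof (intro allI impI, elim conjE)
  fix Y y assume "\<forall>n. Y n \<in> Range R" and Y: "Y \<longlonglongrightarrow> y"
  hence "\<forall>n. \<exists>x. (x, Y n) \<in> R" by blast
  then obtain X where XY: "\<And>n. (X n, Y n) \<in> R" by metis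
  have "dist (X m) (X n) \<le> C * dist (Y m) (Y n)" for m n
    using bounded_below linear_rel_diff[OF linear XY XY, of m n] by (auto simp: dist_norm)
  with Cauchy_dominated[OF LIMSEQ_imp_Cauchy[OF Y] \<open>C \<ge> 0\<close>] obtain x where "X \<longlonglongrightarrow> x"
    using Cauchy_convergent_iff convergent_def by blast
  hence "(\<lambda>n. (X n, Y n)) \<longlonglongrightarrow> (x, y)" using Y by (rule tendsto_Pair)
  hence "(x, y) \<in> R" using closed_sequentially[OF closed, of "\<lambda>n. (X n, Y n)"] XY by simp
  thus "y \<in> Range R" by blast
qed

lemma csubspace_Range: "linear_rel R \<Longrightarrow> csubspace (Range R)"
  unfolding csubspace_def linear_rel_def by blast

lemma resolvent_set_bound:
  assumes "l \<in> resolvent_set A"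
  obtains C where "C \<ge> 0" "\<forall>(x, y) \<in> op_shift A l. norm x \<le> C * norm y"
proof -
  obtain C where C: "\<forall>(x, y) \<in> op_shift A l. norm x \<le> C * norm y"
    using assms unfolding resolvent_set_def by blast
  have "\<forall>(x, y) \<in> op_shift A l. norm x \<le> max C 0 * norm y"
    using C by (fastforce intro: order_trans mult_right_mono)
  then show thesis by (rule that[rotated]) simp
qed

lemma resolvent_set_eigenvector_eq_zero:
  assumes "l \<in> resolvent_set A" and "(x, l *\<^sub>C x) \<in> A"
  shows "x = 0"
proof -
  obtain C where "\<forall>(x, y) \<in> op_shift A l. norm x \<le> C * norm y"
    using resolvent_set_bound[OF assms(1)] by blast
  moreover have "(x, 0) \<in> op_shift A l" using assms(2) by (simp add: op_shift_iff)
  ultimately show ?thesis by fastforce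
qed

lemma adj_bounded_below:
  fixes R :: "('a::complex_inner \<times> 'b::complex_inner) set"
  assumes surj: "Range R = UNIV" and "C \<ge> 0"
    and bounded: "\<forall>(x, y) \<in> R. norm x \<le> C * norm y" and zk: "(z, k) \<in> adj R"
  shows "norm z \<le> C * norm k"
proof -
  obtain x where x: "(x, z) \<in> R" using surj by blast
  have "cinner z z = cinner x k" using zk x unfolding adj_iff by blast
  hence "(norm z)\<^sup>2 = Re (cinner x k)" by (metis Re_complex_of_real cinner_self)
  also have "\<dots> \<le> norm x * norm k"
    using complex_Re_le_cmod[of "cinner x k"] norm_cinner_le[of x k] by linarith
  also have "\<dots> \<le> C * norm z * norm k"
    using bounded x by (fastforce intro: mult_right_mono)
  finally have "norm z * norm z \<le> (C * norm k) * norm z"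
    by (simp add: power2_eq_square algebra_simps)
  thus ?thesis using \<open>C \<ge> 0\<close> by (cases "norm z = 0") auto
qed

lemma Range_adj_eq_UNIV:
  fixes R :: "('a::complex_hilbert \<times> 'b::complex_hilbert) set"
  assumes adj_adj: "adj (adj R) = R" and surj: "Range R = UNIV" and "C \<ge> 0"
    and bounded: "\<forall>(x, y) \<in> R. norm x \<le> C * norm y"
  shows "Range (adj R) = UNIV"
proof (rule closed_csubspace_eq_UNIV)
  show "csubspace (Range (adj R))" by (rule csubspace_Range[OF linear_rel_adj])
  show "closed (Range (adj R))"
    using adj_bounded_below[OF surj \<open>C \<ge> 0\<close> bounded]
    by (intro closed_Range_if_bounded_below[OF linear_rel_adj closed_adj \<open>C \<ge> 0\<close>]) blast
next
  fix q assume orthogonal: "\<forall>w\<in>Range (adj R). cinner q w = 0"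
  have "(q, 0) \<in> adj (adj R)"
    unfolding adj_iff[of q 0]
  proof (intro allI impI)
    fix z y assume "(z, y) \<in> adj R"
    hence "cinner q y = 0" using orthogonal by blast
    thus "cinner y q = cinner z 0" using cinner_commute[of y q] by simp
  qed
  hence "norm q \<le> C * norm (0::'b)" using bounded unfolding adj_adj by blast
  thus "q = 0" by simp
qed

lemma Range_op_shift_adj:
  fixes A :: "('a::complex_hilbert \<times> 'a) set"
  assumes adj_adj: "adj (adj A) = A" and l: "l \<in> resolvent_set A"
  shows "Range (op_shift (adj A) (cnj l)) = UNIV"
proof -
  obtain C where "C \<ge> 0" "\<forall>(x, y) \<in> op_shift A l. norm x \<le> C * norm y"
    using resolvent_set_bound[OF l] by blast
  moreover have "adj (adj (op_shift A l)) = op_shift A l"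
    by (simp add: adj_op_shift adj_adj)
  moreover have "Range (op_shift A l) = UNIV" using l unfolding resolvent_set_def by blast
  ultimately have "Range (adj (op_shift A l)) = UNIV" by (intro Range_adj_eq_UNIV)
  thus ?thesis by (simp add: adj_op_shift)
qed

section \<open>Boundary maps and the resolvent formula\<close>

lemma lin_on_add: "lin_on D F \<Longrightarrow> x \<in> D \<Longrightarrow> y \<in> D \<Longrightarrow> F (x + y) = F x + F y"
  unfolding lin_on_def by blast

lemma lin_on_diff:
  assumes "csubspace D" "lin_on D F" "x \<in> D" "y \<in> D"
  shows "F (x - y) = F x - F y"
proof -
  have "(-1) *\<^sub>C y \<in> D" by (rule csubspace_scaleC[OF assms(1,4)])
  hence "F (x + (-1) *\<^sub>C y) = F x + F ((-1) *\<^sub>C y)" using assms(2,3) unfolding lin_on_def by blast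
  also have "F ((-1) *\<^sub>C y) = (-1) *\<^sub>C F y" using assms(2,4) unfolding lin_on_def by blast
  finally show ?thesis by simp
qed

lemma A0_op_iff: "(x, y) \<in> A0_op domT T G0 \<longleftrightarrow> x \<in> domT \<and> G0 x = 0 \<and> y = T x"
  unfolding A0_op_def graph_on_iff by auto

lemma gamma_field_iff: "(p, y) \<in> gamma_field domT T G0 l \<longleftrightarrow> y \<in> domT \<and> T y = l *\<^sub>C y \<and> p = G0 y"
  unfolding gamma_field_def converse_iff graph_on_iff by auto

lemma A_B_op_iff:
  "(x, y) \<in> A_B_op domT T G0 G1 B \<longleftrightarrow> x \<in> domT \<and> G1 x \<in> Domain B \<and> rel_app B (G1 x) = G0 x \<and> y = T x"
  unfolding A_B_op_def graph_on_iff by auto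

lemma ident_minus_weyl_fun_O_iff:
  "(p, b) \<in> ident_minus (weyl_fun domT T G0 G1 l O B) \<longleftrightarrow>
    (\<exists>w q. w \<in> domT \<and> T w = l *\<^sub>C w \<and> p = G0 w \<and> (G1 w, q) \<in> B \<and> b = p - q)"
  unfolding ident_minus_iff weyl_fun_def relcomp_unfold gamma_field_iff graph_on_iff by blast

locale boundary_maps =
  fixes domT :: "'h::complex_inner set" and T :: "'h \<Rightarrow> 'h" and G0 G1 :: "'h \<Rightarrow> 'g::complex_inner"
  assumes csubspace_dom: "csubspace domT" and lin_T: "lin_on domT T"
    and lin_G0: "lin_on domT G0" and lin_G1: "lin_on domT G1"
begin

lemma dom_diff: "x \<in> domT \<Longrightarrow> y \<in> domT \<Longrightarrow> x - y \<in> domT"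
  by (rule csubspace_diff[OF csubspace_dom])

lemma dom_add: "x \<in> domT \<Longrightarrow> y \<in> domT \<Longrightarrow> x + y \<in> domT"
  by (rule csubspace_add[OF csubspace_dom])

lemma T_add: "x \<in> domT \<Longrightarrow> y \<in> domT \<Longrightarrow> T (x + y) = T x + T y"
  by (rule lin_on_add[OF lin_T])

lemma G0_add: "x \<in> domT \<Longrightarrow> y \<in> domT \<Longrightarrow> G0 (x + y) = G0 x + G0 y"
  by (rule lin_on_add[OF lin_G0])

lemma G1_add: "x \<in> domT \<Longrightarrow> y \<in> domT \<Longrightarrow> G1 (x + y) = G1 x + G1 y"
  by (rule lin_on_add[OF lin_G1])

lemma T_diff: "x \<in> domT \<Longrightarrow> y \<in> domT \<Longrightarrow> T (x - y) = T x - T y"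
  and G0_diff: "x \<in> domT \<Longrightarrow> y \<in> domT \<Longrightarrow> G0 (x - y) = G0 x - G0 y"
  and G1_diff: "x \<in> domT \<Longrightarrow> y \<in> domT \<Longrightarrow> G1 (x - y) = G1 x - G1 y"
  by (simp_all add: lin_on_diff[OF csubspace_dom] lin_T lin_G0 lin_G1)

lemma Domain_gamma_field:
  assumes surj: "Range (op_shift (A0_op domT T G0) l) = UNIV"
  shows "Domain (gamma_field domT T G0 l) = G0 ` domT"
proof
  show "Domain (gamma_field domT T G0 l) \<subseteq> G0 ` domT" by (auto simp: gamma_field_iff)
next
  show "G0 ` domT \<subseteq> Domain (gamma_field domT T G0 l)"
  proof
    fix p assume "p \<in> G0 ` domT"
    then obtain y where y: "y \<in> domT" "p = G0 y" by blast
    \<comment> \<open>split \<open>y\<close> along \<open>dom T = ker G0 \<dotplus> ker (T - l)\<close>\<close>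
    obtain z where "(z, T y - l *\<^sub>C y) \<in> op_shift (A0_op domT T G0) l" using surj by blast
    hence z: "z \<in> domT" "G0 z = 0" "T z = T y - l *\<^sub>C y + l *\<^sub>C z"
      unfolding op_shift_iff A0_op_iff by auto
    have "T (y - z) = l *\<^sub>C (y - z)"
      using z y by (simp add: T_diff complex_module.scale_right_diff_distrib)
    moreover have "G0 (y - z) = p" using y z by (simp add: G0_diff)
    ultimately show "p \<in> Domain (gamma_field domT T G0 l)"
      using dom_diff[OF y(1) z(1)] by (auto simp: gamma_field_iff)
  qed
qed

lemma gamma_field_apply:
  assumes l: "l \<in> resolvent_set (A0_op domT T G0)" and w: "w \<in> domT" "T w = l *\<^sub>C w"
  shows "rel_app (gamma_field domT T G0 l) (G0 w) = w"
proof (rule rel_app_eqI)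
  show "(G0 w, w) \<in> gamma_field domT T G0 l" using w by (simp add: gamma_field_iff)
next
  fix w' assume "(G0 w, w') \<in> gamma_field domT T G0 l"
  hence w': "w' \<in> domT" "T w' = l *\<^sub>C w'" "G0 w' = G0 w" by (auto simp: gamma_field_iff)
  have "(w' - w, l *\<^sub>C (w' - w)) \<in> A0_op domT T G0"
    using w w' by (simp add: A0_op_iff dom_diff T_diff G0_diff complex_module.scale_right_diff_distrib)
  thus "w' = w" using resolvent_set_eigenvector_eq_zero[OF l] by fastforce
qed

context
  fixes B :: "('g \<times> 'g) set" and l :: complex
  assumes lin_B: "lin_op B" and not_eigenvalue: "l \<notin> point_spectrum (A_B_op domT T G0 G1 B)"
begin

lemma A_B_eigenvector_eq_zero:
  assumes "x \<in> domT" "(G1 x, G0 x) \<in> B" "T x = l *\<^sub>C x"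
  shows "x = 0"
proof (rule ccontr)
  assume "x \<noteq> 0"
  have "(x, l *\<^sub>C x) \<in> A_B_op domT T G0 G1 B"
    using assms lin_op_rel_app[OF lin_B assms(2)] by (auto simp: A_B_op_iff)
  thus False using not_eigenvalue \<open>x \<noteq> 0\<close> unfolding point_spectrum_def by blast
qed

lemma A_B_solution_unique:
  assumes "x \<in> domT" "y \<in> domT" "(G1 x - G1 y, G0 x - G0 y) \<in> B" "T x - l *\<^sub>C x = T y - l *\<^sub>C y"
  shows "x = y"
  using A_B_eigenvector_eq_zero[of "x - y"] assms
  by (simp add: dom_diff T_diff G0_diff G1_diff complex_module.scale_right_diff_distrib algebra_simps)

lemma A_B_resolvent_apply:
  assumes v: "v \<in> domT" "(G1 v, G0 v) \<in> B" "T v = f + l *\<^sub>C v"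
  shows "f \<in> Range (op_shift (A_B_op domT T G0 G1 B) l) \<and>
    rel_app (converse (op_shift (A_B_op domT T G0 G1 B) l)) f = v"
proof -
  have vf: "(v, f) \<in> op_shift (A_B_op domT T G0 G1 B) l"
    unfolding op_shift_iff A_B_op_iff using v(1) lin_op_rel_app[OF lin_B v(2)] DomainI[OF v(2)] v(3)[symmetric]
    by (intro conjI)
  have uniq: "v' = v" if "(v', f) \<in> op_shift (A_B_op domT T G0 G1 B) l" for v'
  proof -
    have "v' \<in> domT \<and> G1 v' \<in> Domain B \<and> rel_app B (G1 v') = G0 v' \<and> f + l *\<^sub>C v' = T v'"
      using that unfolding op_shift_iff A_B_op_iff .
    then obtain y where v': "v' \<in> domT" "(G1 v', y) \<in> B" "rel_app B (G1 v') = G0 v'" "f + l *\<^sub>C v' = T v'"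
      by blast
    have "G0 v' = y" by (rule trans[OF sym[OF v'(3)] lin_op_rel_app[OF lin_B v'(2)]])
    with v'(2) have "(G1 v', G0 v') \<in> B" by simp
    from linear_rel_diff[OF lin_op_linear_rel[OF lin_B] this v(2)]
    have "(G1 v' - G1 v, G0 v' - G0 v) \<in> B" .
    moreover have "T v' - l *\<^sub>C v' = T v - l *\<^sub>C v" by (simp add: v'(4)[symmetric] v(3))
    ultimately show "v' = v" by (rule A_B_solution_unique[OF v'(1) v(1)])
  qed
  have "rel_app (converse (op_shift (A_B_op domT T G0 G1 B) l)) f = v"
    by (rule rel_app_eqI) (simp_all add: vf uniq)
  with vf show ?thesis by blast
qed


lemma weyl_inverse_apply:
  assumes w: "w \<in> domT" "T w = l *\<^sub>C w" "(G1 w, q) \<in> B"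
  shows "rel_app (converse (ident_minus (weyl_fun domT T G0 G1 l O B))) (G0 w - q) = G0 w"
proof (rule rel_app_eqI)
  show "(G0 w - q, G0 w) \<in> converse (ident_minus (weyl_fun domT T G0 G1 l O B))"
    unfolding converse_iff ident_minus_weyl_fun_O_iff using w by blast
next
  fix p assume "(G0 w - q, p) \<in> converse (ident_minus (weyl_fun domT T G0 G1 l O B))"
  then obtain w' q' where w': "w' \<in> domT" "T w' = l *\<^sub>C w'" "p = G0 w'" "(G1 w', q') \<in> B"
    and eq: "G0 w - q = p - q'"
    unfolding converse_iff ident_minus_weyl_fun_O_iff by blast
  have "q' - q = p - G0 w"
    using eq by (metis add_diff_cancel_left' diff_add_cancel diff_diff_eq2 add.commute diff_diff_eq)
  hence "q' - q = G0 w' - G0 w" unfolding w'(3) .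
  hence "(G1 w' - G1 w, G0 w' - G0 w) \<in> B"
    using linear_rel_diff[OF lin_op_linear_rel[OF lin_B] w'(4) w(3)] by simp
  hence "w' = w" by (rule A_B_solution_unique[OF w'(1) w(1)]) (simp add: w(2) w'(2))
  thus "p = G0 w" using w'(3) by simp
qed

end

end

locale green_triple =
  T: boundary_maps domT T G0 G1 + Tt: boundary_maps domTt Tt Gt0 Gt1
  for domT :: "'h::complex_hilbert set" and T G0 and G1 :: "'h \<Rightarrow> 'g::complex_hilbert"
    and domTt Tt Gt0 Gt1 +
  assumes green: "\<forall>u\<in>domT. \<forall>v\<in>domTt.
    cinner (T u) v - cinner u (Tt v) = cinner (G1 u) (Gt0 v) - cinner (G0 u) (Gt1 v)"
begin

lemma swap: "green_triple domTt Tt Gt0 Gt1 domT T G0 G1"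
proof unfold_locales
  show "\<forall>v\<in>domTt. \<forall>u\<in>domT.
    cinner (Tt v) u - cinner v (T u) = cinner (Gt1 v) (G0 u) - cinner (Gt0 v) (G1 u)"
  proof (intro ballI)
    fix v u assume "v \<in> domTt" "u \<in> domT"
    hence "cnj (cinner (T u) v - cinner u (Tt v)) = cnj (cinner (G1 u) (Gt0 v) - cinner (G0 u) (Gt1 v))"
      using green by simp
    hence "cinner v (T u) - cinner (Tt v) u = cinner (Gt0 v) (G1 u) - cinner (Gt1 v) (G0 u)"
      by (simp add: cinner_commute[symmetric])
    thus "cinner (Tt v) u - cinner v (T u) = cinner (Gt1 v) (G0 u) - cinner (Gt0 v) (G1 u)"
      by (simp add: algebra_simps)
  qed
qed

lemma adj_gamma_field_eq:
  assumes u: "u \<in> domT" "G0 u = 0" "T u = f + l *\<^sub>C u"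
  shows "(f, G1 u) \<in> adj (gamma_field domTt Tt Gt0 (cnj l))"
  unfolding adj_iff
proof (intro allI impI)
  fix p y assume "(p, y) \<in> gamma_field domTt Tt Gt0 (cnj l)"
  hence y: "y \<in> domTt" "Tt y = cnj l *\<^sub>C y" "p = Gt0 y" by (simp_all add: gamma_field_iff)
  have "cinner (T u) y - cinner u (Tt y) = cinner (G1 u) (Gt0 y) - cinner (G0 u) (Gt1 y)"
    using green u(1) y(1) by blast
  hence "cinner f y = cinner (G1 u) (Gt0 y)" using u y by (simp add: cinner_simps)
  hence "cnj (cinner f y) = cnj (cinner (G1 u) (Gt0 y))" by simp
  thus "cinner y f = cinner p (G1 u)" using y(3) by (simp add: cinner_commute[symmetric])
qed

theorem resolvent_formula:
  fixes B :: "('g \<times> 'g) set"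
  assumes dense: "closure (Gt0 ` domTt) = UNIV"
    and adj_A0: "adj (A0_op domT T G0) = A0_op domTt Tt Gt0"
    and adj_A0t: "adj (A0_op domTt Tt Gt0) = A0_op domT T G0"
    and lin_B: "lin_op B" and l: "l \<in> resolvent_set (A0_op domT T G0)"
    and not_eigenvalue: "l \<notin> point_spectrum (A_B_op domT T G0 G1 B)"
    and h: "(f, h) \<in> adj (gamma_field domTt Tt Gt0 (cnj l))" "h \<in> Domain B"
      "rel_app B h \<in> Range (ident_minus (weyl_fun domT T G0 G1 l O B))"
  shows "f \<in> Range (op_shift (A_B_op domT T G0 G1 B) l) \<and>
    rel_app (converse (op_shift (A_B_op domT T G0 G1 B) l)) f =
      rel_app (converse (op_shift (A0_op domT T G0) l)) f +
      rel_app (gamma_field domT T G0 l)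
        (rel_app (converse (ident_minus (weyl_fun domT T G0 G1 l O B)))
          (rel_app B (rel_app (adj (gamma_field domTt Tt Gt0 (cnj l))) f)))"
proof -
  obtain u where "(u, f) \<in> op_shift (A0_op domT T G0) l"
    using l unfolding resolvent_set_def by blast
  hence u: "u \<in> domT" "G0 u = 0" "T u = f + l *\<^sub>C u" and
    resolvent_A0: "rel_app (converse (op_shift (A0_op domT T G0) l)) f = u"
    using l rel_app_eq[of "converse (op_shift (A0_op domT T G0) l)" f u]
    by (auto simp: op_shift_iff A0_op_iff resolvent_set_def)
  have "Range (op_shift (A0_op domTt Tt Gt0) (cnj l)) = UNIV"
    using Range_op_shift_adj[OF _ l] adj_A0 adj_A0t by simp
  hence "closure (Domain (gamma_field domTt Tt Gt0 (cnj l))) = UNIV"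
    using Tt.Domain_gamma_field dense by simp
  hence "single_valued (adj (gamma_field domTt Tt Gt0 (cnj l)))" by (rule single_valued_adj)
  hence h_eq: "h = G1 u" and adj_gamma_apply: "rel_app (adj (gamma_field domTt Tt Gt0 (cnj l))) f = G1 u"
    using adj_gamma_field_eq[OF u] h(1) by (auto simp: single_valued_def intro: rel_app_eq)
  obtain p where "(p, rel_app B h) \<in> ident_minus (weyl_fun domT T G0 G1 l O B)" using h(3) by blast
  then obtain w q where w: "w \<in> domT" "T w = l *\<^sub>C w" "(G1 w, q) \<in> B" and Bh: "rel_app B h = G0 w - q"
    unfolding ident_minus_weyl_fun_O_iff by blast
  have "(h, rel_app B h) \<in> B"
    using h(2) lin_op_rel_app[OF lin_B] by force
  from linear_rel_add[OF lin_op_linear_rel[OF lin_B] this w(3)]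
  have "(G1 (u + w), G0 (u + w)) \<in> B"
    using u w Bh h_eq by (simp add: T.G0_add T.G1_add)
  moreover have "T (u + w) = f + l *\<^sub>C (u + w)"
    using u w by (simp add: T.T_add complex_module.scale_right_distrib algebra_simps)
  ultimately have "f \<in> Range (op_shift (A_B_op domT T G0 G1 B) l) \<and>
      rel_app (converse (op_shift (A_B_op domT T G0 G1 B) l)) f = u + w"
    using T.A_B_resolvent_apply[OF lin_B not_eigenvalue] T.dom_add u(1) w(1) by blast
  moreover have "rel_app (converse (ident_minus (weyl_fun domT T G0 G1 l O B))) (rel_app B h) = G0 w"
    unfolding Bh using T.weyl_inverse_apply[OF lin_B not_eigenvalue w] .
  moreover have "rel_app (gamma_field domT T G0 l) (G0 w) = w"
    using T.gamma_field_apply[OF l w(1,2)] .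
  ultimately show ?thesis using resolvent_A0 adj_gamma_apply h_eq by simp
qed

end

theorem corollary4p5:
  fixes S St :: "('h::complex_hilbert \<times> 'h) set"
    and domT domTt :: "'h set"
    and T Tt :: "'h \<Rightarrow> 'h"
    and G0 G1 Gt0 Gt1 :: "'h \<Rightarrow> 'g::complex_hilbert"
    and B Bt :: "('g \<times> 'g) set"
    and l mu :: complex
    and f g :: 'h
  assumes separable: "\<exists>D::'h set. countable D \<and> closure D = UNIV"
    and pair: "adjoint_pair S St"
    and coreT: "core_of domT T (adj S)"
    and coreTt: "core_of domTt Tt (adj St)"
    and linG: "lin_on domT G0" "lin_on domT G1" "lin_on domTt Gt0" "lin_on domTt Gt1"
    and G: "\<forall>u\<in>domT. \<forall>v\<in>domTt.
              cinner (T u) v - cinner u (Tt v) = cinner (G1 u) (Gt0 v) - cinner (G0 u) (Gt1 v)"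
    and D: "closure (G0 ` domT) = UNIV" "closure (Gt0 ` domTt) = UNIV"
    and M: "adj (A0_op domT T G0) = A0_op domTt Tt Gt0" "adj (A0_op domTt Tt Gt0) = A0_op domT T G0"
    and rho_ne: "resolvent_set (A0_op domT T G0) \<noteq> {}"
    and linB: "lin_op B" "lin_op Bt"
    and l_res: "l \<in> resolvent_set (A0_op domT T G0)"
    and mu_res: "mu \<in> resolvent_set (A0_op domTt Tt Gt0)"
  shows
   "((l \<notin> point_spectrum (A_B_op domT T G0 G1 B) \<and>
      (\<exists>h. (f, h) \<in> adj (gamma_field domTt Tt Gt0 (cnj l)) \<and> h \<in> Domain B \<and>
           rel_app B h \<in> Range (ident_minus (weyl_fun domT T G0 G1 l O B))))
    \<longrightarrow> f \<in> Range (op_shift (A_B_op domT T G0 G1 B) l) \<and>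
        rel_app (converse (op_shift (A_B_op domT T G0 G1 B) l)) f =
          rel_app (converse (op_shift (A0_op domT T G0) l)) f +
          rel_app (gamma_field domT T G0 l)
            (rel_app (converse (ident_minus (weyl_fun domT T G0 G1 l O B)))
              (rel_app B (rel_app (adj (gamma_field domTt Tt Gt0 (cnj l))) f))))
   \<and>
   ((mu \<notin> point_spectrum (A_B_op domTt Tt Gt0 Gt1 Bt) \<and>
      (\<exists>h. (g, h) \<in> adj (gamma_field domT T G0 (cnj mu)) \<and> h \<in> Domain Bt \<and>
           rel_app Bt h \<in> Range (ident_minus (weyl_fun domTt Tt Gt0 Gt1 mu O Bt))))
    \<longrightarrow> g \<in> Range (op_shift (A_B_op domTt Tt Gt0 Gt1 Bt) mu) \<and>
        rel_app (converse (op_shift (A_B_op domTt Tt Gt0 Gt1 Bt) mu)) g =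
          rel_app (converse (op_shift (A0_op domTt Tt Gt0) mu)) g +
          rel_app (gamma_field domTt Tt Gt0 mu)
            (rel_app (converse (ident_minus (weyl_fun domTt Tt Gt0 Gt1 mu O Bt)))
              (rel_app Bt (rel_app (adj (gamma_field domT T G0 (cnj mu))) g))))"
proof -
  have "boundary_maps domT T G0 G1" "boundary_maps domTt Tt Gt0 Gt1"
    using coreT coreTt linG unfolding core_of_def boundary_maps_def by auto
  then interpret green_triple domT T G0 G1 domTt Tt Gt0 Gt1
    using G by (simp add: green_triple_def green_triple_axioms_def)
  interpret swapped: green_triple domTt Tt Gt0 Gt1 domT T G0 G1 by (rule swap)
  show ?thesis
    using resolvent_formula[OF D(2) M linB(1) l_res]
      swapped.resolvent_formula[OF D(1) M(2,1) linB(2) mu_res] by blast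
qed

end
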